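(* Consider the threshold-sharing interactive proof of knowledge for Rank Syndrome Decoding described in the context. If the prover knows $\mathbf{x}\in\mathbb{F}_{q^m}^n$ with $\mathbf{H}\mathbf{x}=\mathbf{y}$ and $W_R(\mathbf{x})\le r$ and performs the protocol correctly, then the verifier accepts with probability $1$ (the protocol is perfectly complete).
   Context: Let $q$ be a prime power, $m,n,k,r,\eta,\ell,N$ positive integers with $\ell<N$, $\mathbb{F}_{q^m}$ the field with $q^m$ elements and $\mathbb{F}_{q^{m\eta}}$ its degree-$\eta$ extension. For $\mathbf{x}=(x_1,\dots,x_n)\in\mathbb{F}_{q^m}^n$, $W_R(\mathbf{x})$ is the dimension of the $\mathbb{F}_q$-span $U$ of $x_1,\dots,x_n$. A Rank-SD instance is $\mathbf{H}=(\mathbf{I}_{n-k}\,\|\,\mathbf{H}')\in\mathbb{F}_{q^m}^{(n-k)\times n}$, $\mathbf{y}\in\mathbb{F}_{q^m}^{n-k}$; a witness is $\mathbf{x}=(\mathbf{x}_A\|\mathbf{x}_B)$ with $\mathbf{H}\mathbf{x}=\mathbf{y}$, $W_R(\mathbf{x})\le r$, so $\mathbf{x}_A=\mathbf{y}-\mathbf{H}'\mathbf{x}_B$. With $1\in U$, $\dim U=r$, write $\prod_{u\in U}(X-u)=(X^{q^r}-X)+\sum_{i=1}^{r-1}\beta_i(X^{q^i}-X)$. A $(t,N)$-threshold linear secret sharing scheme (LSSS) shares $s$ into $N$ shares so that any $t$ shares reconstruct $s$ (by a linear map) and any $t-1$ reveal nothing. Protocol: the prover builds $(\ell+1,N)$-threshold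 LSSS sharings of $\mathbf{x}_B$, $\boldsymbol\beta$, a uniform $\mathbf{a}\in\mathbb{F}_{q^{m\eta}}^{r}$ and $c=-\langle\boldsymbol\beta,\mathbf{a}\rangle$; party $i$'s state is its shares; it commits each state $\mathsf{cmt}_i=\mathsf{Com}(\mathsf{state}_i,\rho_i)$ and sends the Merkle root $h_0$ of $(\mathsf{cmt}_i)_i$. The verifier sends $((\gamma_j)_{j\le n},\varepsilon)\in\mathbb{F}_{q^{m\eta}}^{n+1}$. For a public set $S$ of $\ell+1$ parties, each party $i\in S$ computes $[\![\mathbf{x}_A]\!]_i=\mathbf{y}-\mathbf{H}'[\![\mathbf{x}_B]\!]_i$, $[\![z]\!]_i=-\sum_j\gamma_j([\![x_j]\!]_i^{q^r}-[\![x_j]\!]_i)$, $[\![\omega_k]\!]_i=\sum_j\gamma_j([\![x_j]\!]_i^{q^k}-[\![x_j]\!]_i)$ $(1\le k\le r-1)$, $[\![\boldsymbol\alpha]\!]_i=\varepsilon[\![\boldsymbol\omega]\!]_i+[\![\mathbf{a}]\!]_i$ ($\boldsymbol\alpha$ is revealed), $[\![v]\!]_i=\varepsilon[\![z]\!]_i-\langle\boldsymbol\alpha,[\![\boldsymbol\beta]\!]_i\rangle-[\![c]\!]_i$; the prover sends $h_1=\mathrm{Hash}(([\![\boldsymbol\alpha]\!]_i,[\![v]\!]_i)_{i\in S})$. The verifier sends $I\subset\{1,\dots,N\}$ with $|I|=\ell$. The prover opens $(\mathsf{state}_i,\rho_i)_{i\in I}$ with Merkle authentication paths, and $[\![\boldsymbol\alpha]\!]_{i^*}$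 for some $i^*\in S\setminus I$. The verifier recomputes the Merkle root, reconstructs $\boldsymbol\alpha$ from the shares in $I\cup\{i^*\}$, sets $[\![v]\!]_{i^*}$ so that $v=0$, recomputes $h_1$, and accepts iff both recomputed values equal $(h_0,h_1)$. *)

theory Defs
  imports "HOL-Computational_Algebra.Polynomial" "HOL-Computational_Algebra.Primes"
begin

text \<open>The ambient type 'a plays the role of F_(q^(m eta)). Subfields are
  described as fixed points of Frobenius powers.\<close>

definition prime_power :: "nat \<Rightarrow> bool" where
  "prime_power q \<longleftrightarrow> (\<exists>p e. prime p \<and> 0 < e \<and> q = p ^ e)"

definition subfield_of_order :: "nat \<Rightarrow> 'a::field set" where
  "subfield_of_order Q = {z. z ^ Q = z}"

definition Fq_span :: "nat \<Rightarrow> 'a::field set \<Rightarrow> 'a set" where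
  "Fq_span q X = {(\<Sum>x\<in>X. c x * x) | c. \<forall>x\<in>X. c x \<in> subfield_of_order q}"

definition Fq_subspace :: "nat \<Rightarrow> 'a::field set \<Rightarrow> bool" where
  "Fq_subspace q U \<longleftrightarrow> 0 \<in> U \<and> (\<forall>u\<in>U. \<forall>v\<in>U. u + v \<in> U)
     \<and> (\<forall>c\<in>subfield_of_order q. \<forall>u\<in>U. c * u \<in> U)"

definition Fq_dim :: "nat \<Rightarrow> 'a::field set \<Rightarrow> nat" where
  "Fq_dim q U = (THE d. card U = q ^ d)"

definition rank_weight :: "nat \<Rightarrow> nat \<Rightarrow> (nat \<Rightarrow> 'a::field) \<Rightarrow> nat" where
  "rank_weight q n x = Fq_dim q (Fq_span q (x ` {..<n}))"

definition subspace_poly_coeffs :: "nat \<Rightarrow> nat \<Rightarrow> 'a::field set \<Rightarrow> (nat \<Rightarrow> 'a) \<Rightarrow> bool" where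
  "subspace_poly_coeffs q r U \<beta> \<longleftrightarrow>
     (\<Prod>u\<in>U. [:- u, 1:]) =
       (monom 1 (q ^ r) - [:0, 1:]) + (\<Sum>i\<in>{1..<r}. smult (\<beta> i) (monom 1 (q ^ i) - [:0, 1:]))"

text \<open>An (ell+1,N)-threshold sharing of s: a polynomial P of degree at most ell
  with P(0) = s; party i gets P(e i).\<close>
definition shamir_poly :: "nat \<Rightarrow> 'a::field poly \<Rightarrow> 'a \<Rightarrow> bool" where
  "shamir_poly ell P s \<longleftrightarrow> degree P \<le> ell \<and> poly P 0 = s"

definition lagrange :: "(nat \<Rightarrow> 'a::field) \<Rightarrow> nat set \<Rightarrow> nat \<Rightarrow> 'a \<Rightarrow> 'a" where
  "lagrange e T j X = (\<Prod>t\<in>T - {j}. (X - e t) / (e j - e t))"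

text \<open>State of a party: (shares of x_B (length k), shares of beta_1..beta_(r-1),
  shares of a_1..a_(r-1), share of c).\<close>
type_synonym 'a state = "'a list \<times> 'a list \<times> 'a list \<times> 'a"

definition st_xB :: "'a state \<Rightarrow> nat \<Rightarrow> 'a" where "st_xB st b = fst st ! b"
definition st_beta :: "'a state \<Rightarrow> nat \<Rightarrow> 'a" where "st_beta st t = fst (snd st) ! (t - 1)"
definition st_a :: "'a state \<Rightarrow> nat \<Rightarrow> 'a" where "st_a st t = fst (snd (snd st)) ! (t - 1)"
definition st_c :: "'a state \<Rightarrow> 'a" where "st_c st = snd (snd (snd st))"

text \<open>x = (x_A || x_B) with x_A = y - H' x_B (coordinates 0..<n-k are x_A,
  coordinate n-k+b is the b-th coordinate of x_B).\<close>
definition loc_x :: "nat \<Rightarrow> nat \<Rightarrow> (nat \<Rightarrow> nat \<Rightarrow> 'a::field) \<Rightarrow> (nat \<Rightarrow> 'a) \<Rightarrow> (nat \<Rightarrow> 'a) \<Rightarrow> nat \<Rightarrow> 'a" where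
  "loc_x n k H' y xB j = (if j < n - k then y j - (\<Sum>b<k. H' j b * xB b) else xB (j - (n - k)))"

definition loc_z :: "nat \<Rightarrow> nat \<Rightarrow> nat \<Rightarrow> (nat \<Rightarrow> 'a::field) \<Rightarrow> (nat \<Rightarrow> 'a) \<Rightarrow> 'a" where
  "loc_z q r n \<gamma> xs = - (\<Sum>j<n. \<gamma> j * (xs j ^ (q ^ r) - xs j))"

definition loc_omega :: "nat \<Rightarrow> nat \<Rightarrow> (nat \<Rightarrow> 'a::field) \<Rightarrow> (nat \<Rightarrow> 'a) \<Rightarrow> nat \<Rightarrow> 'a" where
  "loc_omega q n \<gamma> xs t = (\<Sum>j<n. \<gamma> j * (xs j ^ (q ^ t) - xs j))"

definition party_alpha :: "nat \<Rightarrow> nat \<Rightarrow> nat \<Rightarrow> nat \<Rightarrow> (nat \<Rightarrow> nat \<Rightarrow> 'a::field) \<Rightarrow> (nat \<Rightarrow> 'a)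
    \<Rightarrow> (nat \<Rightarrow> 'a) \<Rightarrow> 'a \<Rightarrow> 'a state \<Rightarrow> 'a list" where
  "party_alpha q r n k H' y \<gamma> \<epsilon> st =
     map (\<lambda>t. \<epsilon> * loc_omega q n \<gamma> (loc_x n k H' y (st_xB st)) t + st_a st t) [1..<r]"

definition party_v :: "nat \<Rightarrow> nat \<Rightarrow> nat \<Rightarrow> nat \<Rightarrow> (nat \<Rightarrow> nat \<Rightarrow> 'a::field) \<Rightarrow> (nat \<Rightarrow> 'a)
    \<Rightarrow> (nat \<Rightarrow> 'a) \<Rightarrow> 'a \<Rightarrow> (nat \<Rightarrow> 'a) \<Rightarrow> 'a state \<Rightarrow> 'a" where
  "party_v q r n k H' y \<gamma> \<epsilon> \<alpha> st =
     \<epsilon> * loc_z q r n \<gamma> (loc_x n k H' y (st_xB st)) - (\<Sum>t\<in>{1..<r}. \<alpha> t * st_beta st t) - st_c st"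

text \<open>Root of the depth-d subtree whose leaves are f o, ..., f (o + 2^d - 1).\<close>
fun mroot :: "('h \<Rightarrow> 'h \<Rightarrow> 'h) \<Rightarrow> (nat \<Rightarrow> 'h) \<Rightarrow> nat \<Rightarrow> nat \<Rightarrow> 'h" where
  "mroot MH f 0 off = f off"
| "mroot MH f (Suc d) off = MH (mroot MH f d off) (mroot MH f d (off + 2 ^ d))"

text \<open>Authentication path (siblings, bottom-up) of leaf i.\<close>
fun mpath :: "('h \<Rightarrow> 'h \<Rightarrow> 'h) \<Rightarrow> (nat \<Rightarrow> 'h) \<Rightarrow> nat \<Rightarrow> nat \<Rightarrow> nat \<Rightarrow> 'h list" where
  "mpath MH f 0 off i = []"
| "mpath MH f (Suc d) off i =
     (if i < off + 2 ^ d then mpath MH f d off i @ [mroot MH f d (off + 2 ^ d)]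
      else mpath MH f d (off + 2 ^ d) i @ [mroot MH f d off])"

fun mrec :: "('h \<Rightarrow> 'h \<Rightarrow> 'h) \<Rightarrow> 'h \<Rightarrow> nat \<Rightarrow> nat \<Rightarrow> 'h list \<Rightarrow> 'h" where
  "mrec MH h i l [] = h"
| "mrec MH h i l (s # ps) = mrec MH (if (i div 2 ^ l) mod 2 = 0 then MH h s else MH s h) i (Suc l) ps"

definition honest_state :: "(nat \<Rightarrow> 'a::field) \<Rightarrow> nat \<Rightarrow> nat \<Rightarrow> (nat \<Rightarrow> 'a poly) \<Rightarrow> (nat \<Rightarrow> 'a poly)
    \<Rightarrow> (nat \<Rightarrow> 'a poly) \<Rightarrow> 'a poly \<Rightarrow> nat \<Rightarrow> 'a state" where
  "honest_state e k r PxB Pbeta Pa Pc i =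
     (map (\<lambda>b. poly (PxB b) (e i)) [0..<k], map (\<lambda>t. poly (Pbeta t) (e i)) [1..<r],
      map (\<lambda>t. poly (Pa t) (e i)) [1..<r], poly Pc (e i))"

text \<open>Merkle leaves: leaf number i-1 is cmt_i for parties i = 1..N, padding beyond.\<close>
definition cmt_leaves :: "nat \<Rightarrow> ('s \<Rightarrow> 'r \<Rightarrow> 'h) \<Rightarrow> 'h \<Rightarrow> (nat \<Rightarrow> 's) \<Rightarrow> (nat \<Rightarrow> 'r) \<Rightarrow> nat \<Rightarrow> 'h" where
  "cmt_leaves N Com pad st \<rho> idx = (if idx < N then Com (st (Suc idx)) (\<rho> (Suc idx)) else pad)"

definition prover_h0 where
  "prover_h0 MH Com pad d N st \<rho> = mroot MH (cmt_leaves N Com pad st \<rho>) d 0"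

definition prover_path where
  "prover_path MH Com pad d N st \<rho> i = mpath MH (cmt_leaves N Com pad st \<rho>) d 0 (i - 1)"

definition prover_alpha :: "nat \<Rightarrow> nat \<Rightarrow> nat \<Rightarrow> nat \<Rightarrow> (nat \<Rightarrow> nat \<Rightarrow> 'a::field) \<Rightarrow> (nat \<Rightarrow> 'a)
    \<Rightarrow> (nat \<Rightarrow> 'a) \<Rightarrow> nat set \<Rightarrow> (nat \<Rightarrow> 'a) \<Rightarrow> 'a \<Rightarrow> (nat \<Rightarrow> 'a state) \<Rightarrow> nat \<Rightarrow> 'a" where
  "prover_alpha q r n k H' y e S \<gamma> \<epsilon> st t =
     (\<Sum>i\<in>S. lagrange e S i 0 * (party_alpha q r n k H' y \<gamma> \<epsilon> (st i) ! (t - 1)))"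

definition prover_h1 where
  "prover_h1 q r n k H' y e S Hash \<gamma> \<epsilon> st =
     Hash (map (\<lambda>i. (party_alpha q r n k H' y \<gamma> \<epsilon> (st i),
                     party_v q r n k H' y \<gamma> \<epsilon> (prover_alpha q r n k H' y e S \<gamma> \<epsilon> st) (st i)))
               (sorted_list_of_set S))"

definition verifier_accepts ::
  "nat \<Rightarrow> nat \<Rightarrow> nat \<Rightarrow> nat \<Rightarrow> (nat \<Rightarrow> nat \<Rightarrow> 'a::field) \<Rightarrow> (nat \<Rightarrow> 'a) \<Rightarrow> (nat \<Rightarrow> 'a) \<Rightarrow> nat set
   \<Rightarrow> ('h \<Rightarrow> 'h \<Rightarrow> 'h) \<Rightarrow> ('a state \<Rightarrow> 'r \<Rightarrow> 'h) \<Rightarrow> (('a list \<times> 'a) list \<Rightarrow> 'g)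
   \<Rightarrow> 'h \<Rightarrow> 'g \<Rightarrow> (nat \<Rightarrow> 'a) \<Rightarrow> 'a \<Rightarrow> nat set \<Rightarrow> nat
   \<Rightarrow> (nat \<Rightarrow> 'a state) \<Rightarrow> (nat \<Rightarrow> 'r) \<Rightarrow> (nat \<Rightarrow> 'h list) \<Rightarrow> 'a list \<Rightarrow> bool" where
  "verifier_accepts q r n k H' y e S MH Com Hash h0 h1 \<gamma> \<epsilon> I istar st \<rho> path \<alpha>star \<longleftrightarrow>
     (\<forall>i\<in>I. mrec MH (Com (st i) (\<rho> i)) (i - 1) 0 (path i) = h0) \<and>
     (let T = insert istar I;
          ash = (\<lambda>i. if i = istar then \<alpha>star else party_alpha q r n k H' y \<gamma> \<epsilon> (st i));
          \<alpha> = (\<lambda>t. \<Sum>i\<in>T. lagrange e T i 0 * (ash i ! (t - 1)));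
          vI = (\<lambda>i. party_v q r n k H' y \<gamma> \<epsilon> \<alpha> (st i));
          vstar = - (\<Sum>i\<in>I. lagrange e T i 0 * vI i) / lagrange e T istar 0;
          vsh = (\<lambda>i. if i = istar then vstar else vI i);
          aexp = (\<lambda>i. map (\<lambda>t. \<Sum>j\<in>T. lagrange e T j (e i) * (ash j ! (t - 1))) [1..<r]);
          vexp = (\<lambda>i. \<Sum>j\<in>T. lagrange e T j (e i) * vsh j)
      in Hash (map (\<lambda>i. (aexp i, vexp i)) (sorted_list_of_set S)) = h1)"

end

theory Submission
  imports Defs "HOL-Number_Theory.Residues"
begin

text \<open>Every value an honest party computes locally is its share, in a degree-ell Shamir
  sharing, of the same expression evaluated on the witness: the local maps are affine in
  the shares, except for the Frobenius powers x \<mapsto> x^(q^t), which commute with sharing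
  because the evaluation points lie in F_q.  Since every x_j lies in U, it is a root of the
  subspace polynomial; this gives z = \<langle>\<beta>, \<omega>\<rangle> and hence v = 0.  So the verifier
  reconstructs the same \<alpha> from any ell + 1 shares, the share of v it solves for is the
  honest one, and Lagrange interpolation reproduces the honest shares of the parties in S,
  so both hashes match.\<close>

definition threshold_sharing ::
    "nat \<Rightarrow> (nat \<Rightarrow> 'a::field) \<Rightarrow> nat set \<Rightarrow> (nat \<Rightarrow> 'a) \<Rightarrow> 'a \<Rightarrow> bool" where
  "threshold_sharing ell e A sh s \<longleftrightarrow> (\<exists>P. shamir_poly ell P s \<and> (\<forall>i\<in>A. sh i = poly P (e i)))"

lemma threshold_sharing_poly:
  "shamir_poly ell P s \<Longrightarrow> threshold_sharing ell e A (\<lambda>i. poly P (e i)) s"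
  unfolding threshold_sharing_def by blast

lemma threshold_sharing_const: "threshold_sharing ell e A (\<lambda>_. s) s"
  unfolding threshold_sharing_def shamir_poly_def by (rule exI[of _ "[:s:]"]) simp

lemma threshold_sharing_cong:
  "threshold_sharing ell e A sh s \<Longrightarrow> (\<And>i. i \<in> A \<Longrightarrow> sh i = sh' i) \<Longrightarrow> s = s'
   \<Longrightarrow> threshold_sharing ell e A sh' s'"
  unfolding threshold_sharing_def by auto

lemma threshold_sharing_add:
  "threshold_sharing ell e A sh s \<Longrightarrow> threshold_sharing ell e A sh' s'
   \<Longrightarrow> threshold_sharing ell e A (\<lambda>i. sh i + sh' i) (s + s')"
  unfolding threshold_sharing_def shamir_poly_def
  by (metis (no_types, lifting) degree_add_le poly_add)

lemma threshold_sharing_diff: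
  "threshold_sharing ell e A sh s \<Longrightarrow> threshold_sharing ell e A sh' s'
   \<Longrightarrow> threshold_sharing ell e A (\<lambda>i. sh i - sh' i) (s - s')"
  unfolding threshold_sharing_def shamir_poly_def
  by (metis (no_types, lifting) degree_diff_le poly_diff)

lemma threshold_sharing_scale:
  "threshold_sharing ell e A sh s \<Longrightarrow> threshold_sharing ell e A (\<lambda>i. c * sh i) (c * s)"
  unfolding threshold_sharing_def shamir_poly_def
  by (metis (no_types, lifting) degree_smult_le order_trans poly_smult)

lemma threshold_sharing_uminus:
  "threshold_sharing ell e A sh s \<Longrightarrow> threshold_sharing ell e A (\<lambda>i. - sh i) (- s)"
  using threshold_sharing_scale[of ell e A sh s "- 1"] by simp

lemma threshold_sharing_sum:
  "finite B \<Longrightarrow> (\<And>b. b \<in> B \<Longrightarrow> threshold_sharing ell e A (sh b) (s b))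
   \<Longrightarrow> threshold_sharing ell e A (\<lambda>i. \<Sum>b\<in>B. sh b i) (\<Sum>b\<in>B. s b)"
proof (induction B rule: finite_induct)
  case empty
  show ?case using threshold_sharing_const[of ell e A 0] by simp
next
  case (insert b B)
  then show ?case by (simp add: threshold_sharing_add)
qed

lemma poly_map_poly_power:
  fixes P :: "'a::field poly"
  assumes additive: "\<And>u v::'a. (u + v) ^ p = u ^ p + v ^ p" and "0 < p"
  shows "poly (map_poly (\<lambda>c. c ^ p) P) (z ^ p) = poly P z ^ p"
proof (induction P rule: pCons_induct)
  case 0
  then show ?case using \<open>0 < p\<close> by simp
next
  case (pCons c P)
  then show ?case
    using \<open>0 < p\<close> by (simp add: map_poly_pCons additive power_mult_distrib)
qed

lemma frobenius_add:
  fixes u v :: "'a::{field,finite}"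
  assumes "prime_power q" and "card (UNIV :: 'a set) = q ^ M"
  shows "(u + v) ^ (q ^ s) = u ^ (q ^ s) + v ^ (q ^ s)"
proof -
  obtain p j where p: "prime p" "q = p ^ j"
    using assms(1) unfolding prime_power_def by blast
  have prime_char: "prime CHAR('a)"
    by (rule prime_CHAR_semidom) (simp add: finite_imp_CHAR_pos)
  have "CHAR('a) dvd p ^ (j * M)"
    using CHAR_dvd_CARD[where 'a='a] assms(2) p(2) by (simp add: power_mult)
  then have "CHAR('a) = p"
    using prime_char p(1) prime_dvd_power primes_dvd_imp_eq by blast
  then have "q ^ s = CHAR('a) ^ (j * s)"
    using p(2) by (simp add: power_mult)
  then show ?thesis using freshmans_dream'[OF prime_char] by blast
qed

lemma subfield_of_order_power_eq:
  assumes "z \<in> subfield_of_order q"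
  shows "z ^ (q ^ s) = z"
proof (induction s)
  case (Suc s)
  have "z ^ (q ^ Suc s) = (z ^ q) ^ (q ^ s)" by (simp add: power_mult mult.commute)
  then show ?case using assms Suc unfolding subfield_of_order_def by simp
qed simp

text \<open>Applying Frobenius to the coefficients of the sharing polynomial gives a sharing
  polynomial of the same degree, and it commutes with evaluation at points of F_q.\<close>
lemma threshold_sharing_frobenius:
  fixes sh :: "nat \<Rightarrow> 'a::{field,finite}"
  assumes q: "prime_power q" and card: "card (UNIV :: 'a set) = q ^ M"
    and points: "e ` A \<subseteq> subfield_of_order q"
    and shared: "threshold_sharing ell e A sh s"
  shows "threshold_sharing ell e A (\<lambda>i. sh i ^ (q ^ t)) (s ^ (q ^ t))"
proof -
  obtain P where P: "shamir_poly ell P s" "\<forall>i\<in>A. sh i = poly P (e i)"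
    using shared unfolding threshold_sharing_def by blast
  have "0 < q" using q unfolding prime_power_def by (auto intro: prime_gt_0_nat)
  then have pos: "0 < q ^ t" by simp
  note frob = poly_map_poly_power[OF frobenius_add[OF q card] pos]
  let ?P = "map_poly (\<lambda>c. c ^ (q ^ t)) P"
  have "shamir_poly ell ?P (s ^ (q ^ t))"
    using P(1) frob[of P 0, unfolded zero_power[OF pos]] pos
    by (simp add: shamir_poly_def degree_map_poly)
  moreover have "sh i ^ (q ^ t) = poly ?P (e i)" if "i \<in> A" for i
  proof -
    have "e i ^ (q ^ t) = e i" using points that by (auto intro: subfield_of_order_power_eq)
    then show ?thesis using P(2) frob[of P "e i"] that by simp
  qed
  ultimately show ?thesis unfolding threshold_sharing_def by blast
qed

lemma lagrange_at_node:
  assumes "finite T" "inj_on e T" "i \<in> T" "j \<in> T"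
  shows "lagrange e T j (e i) = (if j = i then 1 else 0)"
proof (cases "j = i")
  case True
  have "(e i - e t) / (e i - e t) = 1" if "t \<in> T - {i}" for t
    using that assms inj_on_eq_iff[OF assms(2)] by auto
  then show ?thesis unfolding lagrange_def True by simp
next
  case False
  then show ?thesis
    unfolding lagrange_def using assms by (auto intro!: bexI[of _ i] simp: prod_zero_iff)
qed

lemma lagrange_at_zero_nonzero:
  assumes "finite T" "inj_on e T" "\<forall>t\<in>T. e t \<noteq> 0" "j \<in> T"
  shows "lagrange e T j 0 \<noteq> 0"
  unfolding lagrange_def
  using assms inj_on_eq_iff[OF assms(2)] by (auto simp: prod_zero_iff)

lemma lagrange_interpolation:
  fixes P :: "'a::field poly"
  assumes T: "finite T" "inj_on e T" and deg: "degree P < card T"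
  shows "(\<Sum>j\<in>T. lagrange e T j X * poly P (e j)) = poly P X"
proof -
  define basis where "basis j = (\<Prod>t\<in>T - {j}. Polynomial.smult (1 / (e j - e t)) [:- e t, 1:])" for j
  define L where "L = (\<Sum>j\<in>T. Polynomial.smult (poly P (e j)) (basis j))"
  have "poly (basis j) X = lagrange e T j X" for j X
    unfolding basis_def lagrange_def poly_prod
    by (intro prod.cong) (simp_all add: divide_inverse algebra_simps)
  then have poly_L: "poly L X = (\<Sum>j\<in>T. lagrange e T j X * poly P (e j))" for X
    unfolding L_def poly_sum by (simp add: mult.commute)
  have "degree (basis j) \<le> card T - 1" if "j \<in> T" for j
  proof -
    have "degree (basis j) \<le> (\<Sum>t\<in>T - {j}. 1)"
      unfolding basis_def using T(1)
      by (intro order_trans[OF degree_prod_sum_le] sum_mono) auto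
    then show ?thesis using that T(1) by simp
  qed
  then have "degree L \<le> card T - 1"
    unfolding L_def by (intro degree_sum_le T(1) order_trans[OF degree_smult_le]) auto
  then have deg_L: "degree L < card (e ` T)"
    using deg T by (simp add: card_image)
  have "L = P"
  proof (rule poly_eqI_degree[OF _ deg_L])
    fix z assume "z \<in> e ` T"
    then obtain i where i: "i \<in> T" "z = e i" by blast
    have "poly L (e i) = (\<Sum>j\<in>T. if j = i then poly P (e j) else 0)"
      unfolding poly_L using T i(1) by (intro sum.cong) (simp_all add: lagrange_at_node)
    then show "poly L z = poly P z"
      using T(1) i by simp
  next
    show "degree P < card (e ` T)" using deg T by (simp add: card_image)
  qed
  then show ?thesis using poly_L[of X] by simp
qed

lemma threshold_sharing_reconstruct:
  assumes shared: "threshold_sharing ell e A sh s"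
    and T: "T \<subseteq> A" "card T = Suc ell" and inj: "inj_on e A"
  shows "(\<Sum>j\<in>T. lagrange e T j 0 * sh j) = s"
    and "i \<in> A \<Longrightarrow> (\<Sum>j\<in>T. lagrange e T j (e i) * sh j) = sh i"
proof -
  obtain P where P: "shamir_poly ell P s" "\<forall>i\<in>A. sh i = poly P (e i)"
    using shared unfolding threshold_sharing_def by blast
  have fin: "finite T" using T(2) by (simp add: card_ge_0_finite)
  have "(\<Sum>j\<in>T. lagrange e T j X * sh j) = poly P X" for X
  proof -
    have "(\<Sum>j\<in>T. lagrange e T j X * sh j) = (\<Sum>j\<in>T. lagrange e T j X * poly P (e j))"
      using P(2) T(1) by (intro sum.cong) auto
    also have "\<dots> = poly P X"
      using P(1) T(2) inj_on_subset[OF inj T(1)]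
      by (intro lagrange_interpolation fin) (auto simp: shamir_poly_def)
    finally show ?thesis .
  qed
  then show "(\<Sum>j\<in>T. lagrange e T j 0 * sh j) = s"
    and "i \<in> A \<Longrightarrow> (\<Sum>j\<in>T. lagrange e T j (e i) * sh j) = sh i"
    using P unfolding shamir_poly_def by auto
qed

lemma threshold_sharing_missing_share:
  assumes shared: "threshold_sharing ell e A sh 0"
    and I: "I \<subseteq> A" "finite I" "card I = ell" and j: "j \<in> A - I"
    and inj: "inj_on e A" and nonzero: "\<forall>i\<in>A. e i \<noteq> 0"
  shows "sh j = - (\<Sum>i\<in>I. lagrange e (insert j I) i 0 * sh i) / lagrange e (insert j I) j 0"
proof -
  let ?T = "insert j I"
  have T: "?T \<subseteq> A" "card ?T = Suc ell" using I j by auto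
  have "lagrange e ?T j 0 \<noteq> 0"
    using lagrange_at_zero_nonzero[of ?T e j] I(2) T(1) inj_on_subset[OF inj] nonzero by auto
  moreover have "lagrange e ?T j 0 * sh j + (\<Sum>i\<in>I. lagrange e ?T i 0 * sh i) = 0"
    using threshold_sharing_reconstruct(1)[OF shared T inj] I(2) j by simp
  ultimately show ?thesis by (simp add: field_simps eq_neg_iff_add_eq_0)
qed

lemma mrec_snoc:
  "mrec MH h i l (ps @ [s]) =
     (let h' = mrec MH h i l ps in if (i div 2 ^ (l + length ps)) mod 2 = 0 then MH h' s else MH s h')"
  by (induction ps arbitrary: h l) (simp_all add: Let_def)

lemma length_mpath [simp]: "length (mpath MH f d off i) = d"
  by (induction d arbitrary: off) auto

text \<open>Subtrees of width 2^d start at multiples of 2^d, so bit d of the leaf index tells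
  on which side of its sibling the subtree containing the leaf lies.\<close>
lemma mrec_mpath:
  assumes "off = c * 2 ^ d" "off \<le> i" "i < off + 2 ^ d"
  shows "mrec MH (f i) i 0 (mpath MH f d off i) = mroot MH f d off"
  using assms
proof (induction d arbitrary: off c)
  case 0
  then have "i = off" by simp
  then show ?case by simp
next
  case (Suc d)
  show ?case
  proof (cases "i < off + 2 ^ d")
    case True
    have off: "off = (2 * c) * 2 ^ d" using Suc.prems by simp
    have "i div 2 ^ d = 2 * c"
      using Suc.prems True off by (intro div_nat_eqI) (auto simp: algebra_simps)
    then show ?thesis using True Suc.IH[OF off] Suc.prems by (simp add: mrec_snoc)
  next
    case False
    have off: "off + 2 ^ d = (2 * c + 1) * 2 ^ d" using Suc.prems by simp
    have "i div 2 ^ d = 2 * c + 1"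
      using Suc.prems False off by (intro div_nat_eqI) (auto simp: algebra_simps)
    then show ?thesis using False Suc.IH[OF off] Suc.prems by (simp add: mrec_snoc)
  qed
qed

lemma prover_path_authenticates:
  assumes "i \<in> {1..N}" "N \<le> 2 ^ d"
  shows "mrec MH (Com (st i) (\<rho> i)) (i - 1) 0 (prover_path MH Com pad d N st \<rho> i)
    = prover_h0 MH Com pad d N st \<rho>"
proof -
  have "cmt_leaves N Com pad st \<rho> (i - 1) = Com (st i) (\<rho> i)"
    using assms(1) by (auto simp: cmt_leaves_def)
  moreover have "mrec MH (cmt_leaves N Com pad st \<rho> (i - 1)) (i - 1) 0
      (mpath MH (cmt_leaves N Com pad st \<rho>) d 0 (i - 1)) = mroot MH (cmt_leaves N Com pad st \<rho>) d 0"
    using assms by (intro mrec_mpath[of 0 0]) auto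
  ultimately show ?thesis unfolding prover_path_def prover_h0_def by simp
qed

lemma subspace_poly_root:
  assumes "subspace_poly_coeffs q r U \<beta>" "finite U" "u \<in> U"
  shows "(u ^ (q ^ r) - u) + (\<Sum>t\<in>{1..<r}. \<beta> t * (u ^ (q ^ t) - u)) = 0"
proof -
  have "poly (\<Prod>v\<in>U. [:- v, 1:]) u = 0"
    using assms(2,3) by (auto simp: poly_prod prod_zero_iff)
  then show ?thesis
    using assms(1) unfolding subspace_poly_coeffs_def by (simp add: poly_sum poly_monom)
qed

lemma loc_z_subspace_poly:
  assumes "subspace_poly_coeffs q r U \<beta>" "finite U" "\<forall>j<n. x j \<in> U"
  shows "loc_z q r n \<gamma> x = (\<Sum>t\<in>{1..<r}. \<beta> t * loc_omega q n \<gamma> x t)"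
proof -
  have "x j ^ (q ^ r) - x j = - (\<Sum>t\<in>{1..<r}. \<beta> t * (x j ^ (q ^ t) - x j))" if "j < n" for j
    using subspace_poly_root[OF assms(1,2)] assms(3) that by (simp add: eq_neg_iff_add_eq_0)
  then have "loc_z q r n \<gamma> x = (\<Sum>j<n. \<gamma> j * (\<Sum>t\<in>{1..<r}. \<beta> t * (x j ^ (q ^ t) - x j)))"
    unfolding loc_z_def by (simp add: sum_negf)
  also have "\<dots> = (\<Sum>t\<in>{1..<r}. \<beta> t * loc_omega q n \<gamma> x t)"
    unfolding loc_omega_def sum_distrib_left by (subst sum.swap) (simp add: mult_ac)
  finally show ?thesis .
qed

locale shared_rsd_witness =
  fixes q M ell :: nat and e :: "nat \<Rightarrow> 'a::{field,finite}" and A :: "nat set"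
    and n k r :: nat and H' :: "nat \<Rightarrow> nat \<Rightarrow> 'a" and y x :: "nat \<Rightarrow> 'a"
    and st :: "nat \<Rightarrow> 'a state" and \<beta> a :: "nat \<Rightarrow> 'a" and c :: 'a
  assumes prime_power: "prime_power q" and card_UNIV: "card (UNIV :: 'a set) = q ^ M"
    and points_in_subfield: "e ` A \<subseteq> subfield_of_order q"
    and syndrome: "\<forall>i<n - k. x i + (\<Sum>b<k. H' i b * x (n - k + b)) = y i"
    and xB_shared:
      "\<And>b. b < k \<Longrightarrow> threshold_sharing ell e A (\<lambda>i. st_xB (st i) b) (x (n - k + b))"
    and beta_shared:
      "\<And>t. t \<in> {1..<r} \<Longrightarrow> threshold_sharing ell e A (\<lambda>i. st_beta (st i) t) (\<beta> t)"
    and a_shared: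
      "\<And>t. t \<in> {1..<r} \<Longrightarrow> threshold_sharing ell e A (\<lambda>i. st_a (st i) t) (a t)"
    and c_shared: "threshold_sharing ell e A (\<lambda>i. st_c (st i)) c"
begin

abbreviation local_x :: "nat \<Rightarrow> nat \<Rightarrow> 'a" where
  "local_x i \<equiv> loc_x n k H' y (st_xB (st i))"

lemma loc_x_shared:
  assumes "j < n"
  shows "threshold_sharing ell e A (\<lambda>i. local_x i j) (x j)"
proof (cases "j < n - k")
  case True
  have "threshold_sharing ell e A (\<lambda>i. y j - (\<Sum>b<k. H' j b * st_xB (st i) b))
      (y j - (\<Sum>b<k. H' j b * x (n - k + b)))"
    by (intro threshold_sharing_diff threshold_sharing_const threshold_sharing_sum
        threshold_sharing_scale xB_shared) auto
  moreover have "y j - (\<Sum>b<k. H' j b * x (n - k + b)) = x j"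
    using syndrome True by (metis add_diff_cancel_right')
  ultimately show ?thesis
    using True by (auto simp: loc_x_def intro: threshold_sharing_cong)
next
  case False
  then have "j - (n - k) < k" "n - k + (j - (n - k)) = j" using assms by auto
  then show ?thesis
    using xB_shared[of "j - (n - k)"] False by (auto simp: loc_x_def intro: threshold_sharing_cong)
qed

lemma loc_omega_shared:
  "threshold_sharing ell e A (\<lambda>i. loc_omega q n \<gamma> (local_x i) t) (loc_omega q n \<gamma> x t)"
  unfolding loc_omega_def
  by (intro threshold_sharing_sum threshold_sharing_scale threshold_sharing_diff
      threshold_sharing_frobenius[OF prime_power card_UNIV points_in_subfield] loc_x_shared) auto

lemma loc_z_shared:
  "threshold_sharing ell e A (\<lambda>i. loc_z q r n \<gamma> (local_x i)) (loc_z q r n \<gamma> x)"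
  unfolding loc_z_def
  by (intro threshold_sharing_uminus threshold_sharing_sum threshold_sharing_scale
      threshold_sharing_diff threshold_sharing_frobenius[OF prime_power card_UNIV points_in_subfield] loc_x_shared) auto

lemma party_alpha_shared:
  assumes "t \<in> {1..<r}"
  shows "threshold_sharing ell e A (\<lambda>i. party_alpha q r n k H' y \<gamma> \<epsilon> (st i) ! (t - 1))
    (\<epsilon> * loc_omega q n \<gamma> x t + a t)"
proof -
  have "party_alpha q r n k H' y \<gamma> \<epsilon> (st i) ! (t - 1)
      = \<epsilon> * loc_omega q n \<gamma> (local_x i) t + st_a (st i) t" for i
    using assms by (auto simp: party_alpha_def)
  then show ?thesis
    using threshold_sharing_add[OF threshold_sharing_scale[OF loc_omega_shared] a_shared[OF assms]]
    by simp
qed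

lemma party_v_shared:
  "threshold_sharing ell e A (\<lambda>i. party_v q r n k H' y \<gamma> \<epsilon> \<alpha> (st i))
    (\<epsilon> * loc_z q r n \<gamma> x - (\<Sum>t\<in>{1..<r}. \<alpha> t * \<beta> t) - c)"
  unfolding party_v_def
  by (intro threshold_sharing_diff threshold_sharing_scale loc_z_shared threshold_sharing_sum
      beta_shared c_shared) auto

end

lemma party_v_cong:
  assumes "\<And>t. t \<in> {1..<r} \<Longrightarrow> \<alpha> t = \<alpha>' t"
  shows "party_v q r n k H' y \<gamma> \<epsilon> \<alpha> st = party_v q r n k H' y \<gamma> \<epsilon> \<alpha>' st"
proof -
  have "(\<Sum>t\<in>{1..<r}. \<alpha> t * st_beta st t) = (\<Sum>t\<in>{1..<r}. \<alpha>' t * st_beta st t)"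
    using assms by (intro sum.cong) simp_all
  then show ?thesis unfolding party_v_def by simp
qed

lemma map_nth_party_alpha:
  "map (\<lambda>t. party_alpha q r n k H' y \<gamma> \<epsilon> st ! (t - 1)) [1..<r]
    = party_alpha q r n k H' y \<gamma> \<epsilon> st"
  unfolding party_alpha_def by (intro map_cong) auto

lemma party_alpha_interpolate:
  assumes alpha_shared: "\<And>t. t \<in> {1..<r} \<Longrightarrow>
      threshold_sharing ell e A (\<lambda>i. party_alpha q r n k H' y \<gamma> \<epsilon> (st i) ! (t - 1)) (\<alpha> t)"
    and "T \<subseteq> A" "card T = Suc ell" "inj_on e A" "i \<in> A"
  shows "map (\<lambda>t. \<Sum>j\<in>T. lagrange e T j (e i) * (party_alpha q r n k H' y \<gamma> \<epsilon> (st j) ! (t - 1))) [1..<r]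
    = party_alpha q r n k H' y \<gamma> \<epsilon> (st i)"
proof -
  have "(\<Sum>j\<in>T. lagrange e T j (e i) * (party_alpha q r n k H' y \<gamma> \<epsilon> (st j) ! (t - 1)))
      = party_alpha q r n k H' y \<gamma> \<epsilon> (st i) ! (t - 1)" if "t \<in> {1..<r}" for t
    using threshold_sharing_reconstruct(2)[OF alpha_shared[OF that] assms(2-5)] .
  then show ?thesis
    by (subst map_nth_party_alpha[symmetric]) (intro map_cong; simp)
qed

lemma verifier_accepts_shared_execution:
  fixes e :: "nat \<Rightarrow> 'a::field" and st :: "nat \<Rightarrow> 'a state"
  assumes points: "inj_on e {1..N}" "\<forall>i\<in>{1..N}. e i \<noteq> 0" and merkle: "N \<le> 2 ^ d"
    and S: "S \<subseteq> {1..N}" "card S = Suc ell" and I: "I \<subseteq> {1..N}" "card I = ell"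
    and istar: "istar \<in> S - I"
    and alpha_shared: "\<And>t. t \<in> {1..<r} \<Longrightarrow> threshold_sharing ell e {1..N}
      (\<lambda>i. party_alpha q r n k H' y \<gamma> \<epsilon> (st i) ! (t - 1)) (\<alpha> t)"
    and v_shared: "threshold_sharing ell e {1..N} (\<lambda>i. party_v q r n k H' y \<gamma> \<epsilon> \<alpha> (st i)) 0"
  shows "verifier_accepts q r n k H' y e S MH Com Hash
    (prover_h0 MH Com pad d N st \<rho>) (prover_h1 q r n k H' y e S Hash \<gamma> \<epsilon> st)
    \<gamma> \<epsilon> I istar st \<rho> (prover_path MH Com pad d N st \<rho>)
    (party_alpha q r n k H' y \<gamma> \<epsilon> (st istar))"
proof -
  define T where "T = insert istar I"
  let ?alpha_sh = "\<lambda>i. party_alpha q r n k H' y \<gamma> \<epsilon> (st i)"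
  let ?v = "\<lambda>i. party_v q r n k H' y \<gamma> \<epsilon> \<alpha> (st i)"
  have finite_I: "finite I" using I(1) finite_subset by blast
  have T: "T \<subseteq> {1..N}" "card T = Suc ell" using I S istar finite_I unfolding T_def by auto
  have alpha_sh: "(\<lambda>i. if i = istar then ?alpha_sh istar else ?alpha_sh i) = ?alpha_sh" by auto
  have "prover_alpha q r n k H' y e S \<gamma> \<epsilon> st t = \<alpha> t" if "t \<in> {1..<r}" for t
    unfolding prover_alpha_def
    using threshold_sharing_reconstruct(1)[OF alpha_shared[OF that] S points(1)] .
  then have v_prover:
    "party_v q r n k H' y \<gamma> \<epsilon> (prover_alpha q r n k H' y e S \<gamma> \<epsilon> st) (st i) = ?v i" for i
    by (rule party_v_cong)
  have "(\<Sum>j\<in>T. lagrange e T j 0 * (?alpha_sh j ! (t - 1))) = \<alpha> t" if "t \<in> {1..<r}" for t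
    using threshold_sharing_reconstruct(1)[OF alpha_shared[OF that] T points(1)] .
  then have v_verifier: "party_v q r n k H' y \<gamma> \<epsilon>
      (\<lambda>t. \<Sum>j\<in>T. lagrange e T j 0 * (?alpha_sh j ! (t - 1))) (st i) = ?v i" for i
    by (rule party_v_cong)
  have "- (\<Sum>i\<in>I. lagrange e T i 0 * ?v i) / lagrange e T istar 0 = ?v istar"
    using threshold_sharing_missing_share[OF v_shared I(1) finite_I I(2) _ points] istar S(1)
    unfolding T_def by auto
  then have v_sh: "(if j = istar then - (\<Sum>i\<in>I. lagrange e T i 0 * ?v i) / lagrange e T istar 0
      else ?v j) = ?v j" for j
    by simp
  have shares_S:
    "map (\<lambda>i. (map (\<lambda>t. \<Sum>j\<in>T. lagrange e T j (e i) * (?alpha_sh j ! (t - 1))) [1..<r],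
                \<Sum>j\<in>T. lagrange e T j (e i) * ?v j)) (sorted_list_of_set S)
      = map (\<lambda>i. (?alpha_sh i, ?v i)) (sorted_list_of_set S)"
  proof (intro map_cong refl)
    fix i assume "i \<in> set (sorted_list_of_set S)"
    then have i: "i \<in> {1..N}" using S(1) finite_subset[OF S(1)] by auto
    have "map (\<lambda>t. \<Sum>j\<in>T. lagrange e T j (e i) * (?alpha_sh j ! (t - 1))) [1..<r] = ?alpha_sh i"
      using alpha_shared T points(1) i by (rule party_alpha_interpolate)
    moreover have "(\<Sum>j\<in>T. lagrange e T j (e i) * ?v j) = ?v i"
      using threshold_sharing_reconstruct(2)[OF v_shared T points(1) i] .
    ultimately show "(map (\<lambda>t. \<Sum>j\<in>T. lagrange e T j (e i) * (?alpha_sh j ! (t - 1))) [1..<r],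
        \<Sum>j\<in>T. lagrange e T j (e i) * ?v j) = (?alpha_sh i, ?v i)" by simp
  qed
  have paths: "\<forall>i\<in>I. mrec MH (Com (st i) (\<rho> i)) (i - 1) 0 (prover_path MH Com pad d N st \<rho> i)
      = prover_h0 MH Com pad d N st \<rho>"
    using I(1) by (intro ballI prover_path_authenticates merkle) blast
  show ?thesis
    unfolding verifier_accepts_def prover_h1_def Let_def T_def[symmetric]
      alpha_sh v_verifier v_sh v_prover
    using paths shares_S by (intro conjI) (simp_all only:)
qed

lemma honest_state_shares:
  "b < k \<Longrightarrow> st_xB (honest_state e k r PxB Pbeta Pa Pc i) b = poly (PxB b) (e i)"
  "t \<in> {1..<r} \<Longrightarrow> st_beta (honest_state e k r PxB Pbeta Pa Pc i) t = poly (Pbeta t) (e i)"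
  "t \<in> {1..<r} \<Longrightarrow> st_a (honest_state e k r PxB Pbeta Pa Pc i) t = poly (Pa t) (e i)"
  "st_c (honest_state e k r PxB Pbeta Pa Pc i) = poly Pc (e i)"
  by (auto simp: honest_state_def st_xB_def st_beta_def st_a_def st_c_def)

theorem theorem4:
  fixes q m n k r \<eta> ell N d :: nat
    and H' :: "nat \<Rightarrow> nat \<Rightarrow> 'a::{field,finite}" and y x :: "nat \<Rightarrow> 'a"
    and U :: "'a set" and \<beta> a :: "nat \<Rightarrow> 'a" and c :: 'a
    and PxB Pbeta Pa :: "nat \<Rightarrow> 'a poly" and Pc :: "'a poly"
    and e :: "nat \<Rightarrow> 'a"
    and Com :: "'a state \<Rightarrow> 'r \<Rightarrow> 'h" and \<rho> :: "nat \<Rightarrow> 'r"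
    and MH :: "'h \<Rightarrow> 'h \<Rightarrow> 'h" and pad :: 'h
    and Hash :: "('a list \<times> 'a) list \<Rightarrow> 'g"
    and S I :: "nat set" and istar :: nat
    and \<gamma> :: "nat \<Rightarrow> 'a" and \<epsilon> :: 'a
  assumes q: "prime_power q"
    and card_field: "card (UNIV :: 'a set) = q ^ (m * \<eta>)"
    and pos: "0 < m" "0 < n" "0 < k" "0 < r" "0 < \<eta>" "0 < ell" "0 < N"
    and ell_N: "ell < N" and k_n: "k < n"
    and inst: "\<forall>i<n-k. \<forall>b<k. H' i b \<in> subfield_of_order (q ^ m)"
              "\<forall>i<n-k. y i \<in> subfield_of_order (q ^ m)"
    and x_in: "\<forall>j<n. x j \<in> subfield_of_order (q ^ m)"
    and syndrome: "\<forall>i<n-k. x i + (\<Sum>b<k. H' i b * x (n - k + b)) = y i"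
    and weight: "rank_weight q n x \<le> r"
    and U: "U \<subseteq> subfield_of_order (q ^ m)" "Fq_subspace q U" "1 \<in> U" "Fq_dim q U = r"
           "\<forall>j<n. x j \<in> U"
    and beta: "subspace_poly_coeffs q r U \<beta>"
    and c: "c = - (\<Sum>t\<in>{1..<r}. \<beta> t * a t)"
    and shares: "\<forall>b<k. shamir_poly ell (PxB b) (x (n - k + b))"
                "\<forall>t\<in>{1..<r}. shamir_poly ell (Pbeta t) (\<beta> t)"
                "\<forall>t\<in>{1..<r}. shamir_poly ell (Pa t) (a t)"
                "shamir_poly ell Pc c"
    and points: "inj_on e {1..N}" "\<forall>i\<in>{1..N}. e i \<in> subfield_of_order q \<and> e i \<noteq> 0"
    and merkle: "N \<le> 2 ^ d"
    and S: "S \<subseteq> {1..N}" "card S = ell + 1"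
    and I: "I \<subseteq> {1..N}" "card I = ell"
    and istar: "istar \<in> S - I"
  shows "let st = honest_state e k r PxB Pbeta Pa Pc in
         verifier_accepts q r n k H' y e S MH Com Hash
           (prover_h0 MH Com pad d N st \<rho>)
           (prover_h1 q r n k H' y e S Hash \<gamma> \<epsilon> st)
           \<gamma> \<epsilon> I istar st \<rho>
           (prover_path MH Com pad d N st \<rho>)
           (party_alpha q r n k H' y \<gamma> \<epsilon> (st istar))"
proof -
  let ?st = "honest_state e k r PxB Pbeta Pa Pc"
  interpret shared_rsd_witness q "m * \<eta>" ell e "{1..N}" n k r H' y x ?st \<beta> a c
    using q card_field points(2) syndrome shares
    by unfold_locales (auto simp: honest_state_shares intro: threshold_sharing_poly)
  define \<alpha> where "\<alpha> t = \<epsilon> * loc_omega q n \<gamma> x t + a t" for t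
  have alpha_shared: "\<And>t. t \<in> {1..<r} \<Longrightarrow>
      threshold_sharing ell e {1..N} (\<lambda>i. party_alpha q r n k H' y \<gamma> \<epsilon> (?st i) ! (t - 1)) (\<alpha> t)"
    unfolding \<alpha>_def by (rule party_alpha_shared)
  have "\<epsilon> * loc_z q r n \<gamma> x - (\<Sum>t\<in>{1..<r}. \<alpha> t * \<beta> t) - c = 0"
    unfolding \<alpha>_def c loc_z_subspace_poly[OF beta finite U(5)]
    by (simp add: algebra_simps sum.distrib sum_distrib_left)
  then have "threshold_sharing ell e {1..N} (\<lambda>i. party_v q r n k H' y \<gamma> \<epsilon> \<alpha> (?st i)) 0"
    using party_v_shared by metis
  with alpha_shared show ?thesis
    unfolding Let_def using points merkle S I istar
    by (intro verifier_accepts_shared_execution) auto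
qed

end
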